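(* Under the hypotheses of Theorem 9 (connected $G$, non-cut edge $e=(i,j)$, $i\ne j$, $a_{ij}>0$, $v=e_i-e_j$, $\widehat A=A+a_{ij}vv^T$, $c(e)=K(D^{-1}\widehat A)-K(D^{-1}A)$), the matrix \[ S=D-A+\frac{1}{\|d\|_1}dd^T \] is symmetric positive definite, and with $x=S^{-1}v$, $\alpha=a_{ij}(x_i-x_j)$, $\beta=a_{ij}x^TDx$, one has $\alpha\neq 1$ and \[ c(e)=\frac{\beta}{1-\alpha}. \]
   Context: Graphs are undirected and possibly weighted on vertex set $\{1,\dots,n\}$, with symmetric nonnegative adjacency matrix $A=(a_{k\ell})$; $d=A\mathbf 1$ (all entries assumed positive), $D=\mathrm{diag}(d)$, $\|d\|_1=\sum_kd_k$; $e_k$ is the $k$-th column of the identity and $\mathbf 1$ the all-ones vector. For an irreducible row-stochastic matrix $Q$ with stationary vector $\pi$, the Kemeny constant is $K(Q)=\sum_j\pi_j m_{kj}$, where $m_{kj}$ is the expected first passage time from $k$ to $j$ ($m_{kk}=0$), independent of $k$; equivalently $K(Q)=\sum_{\ell=2}^n 1/(1-\lambda_\ell)$, where $1=\lambda_1,\lambda_2,\dots,\lambda_n$ are the eigenvalues of $Q$. The edge $e$ is a cut-edge if the graph obtained by deleting $e$ is disconnected. *)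

theory Defs
  imports "Jordan_Normal_Form.Gauss_Jordan_Elimination" "Jordan_Normal_Form.Char_Poly"
begin

(* Vertices are indexed 0..n-1 (JNF convention) instead of 1..n. *)

definition ones_vec :: "nat \<Rightarrow> real vec" where
  "ones_vec n = vec n (\<lambda>_. 1)"

definition degree_vec :: "real mat \<Rightarrow> real vec" where
  "degree_vec A = A *\<^sub>v ones_vec (dim_row A)"

definition diag_of :: "real vec \<Rightarrow> real mat" where
  "diag_of d = mat (dim_vec d) (dim_vec d) (\<lambda>(k,l). if k = l then d $ k else 0)"

definition outer :: "real vec \<Rightarrow> real vec \<Rightarrow> real mat" where
  "outer u w = mat (dim_vec u) (dim_vec w) (\<lambda>(k,l). u $ k * w $ l)"

definition norm1 :: "real vec \<Rightarrow> real" where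
  "norm1 d = (\<Sum>k<dim_vec d. \<bar>d $ k\<bar>)"

(* graph adjacency: k ~ l iff k <> l and a_kl > 0 (loops are irrelevant for connectivity) *)
definition adj_rel :: "real mat \<Rightarrow> nat \<Rightarrow> nat \<Rightarrow> bool" where
  "adj_rel A k l = (k < dim_row A \<and> l < dim_row A \<and> k \<noteq> l \<and> A $$ (k,l) > 0)"

definition graph_connected :: "real mat \<Rightarrow> bool" where
  "graph_connected A = (\<forall>k<dim_row A. \<forall>l<dim_row A. (adj_rel A)\<^sup>*\<^sup>* k l)"

definition delete_edge :: "real mat \<Rightarrow> nat \<Rightarrow> nat \<Rightarrow> real mat" where
  "delete_edge A i j = mat (dim_row A) (dim_col A)
     (\<lambda>(k,l). if (k = i \<and> l = j) \<or> (k = j \<and> l = i) then 0 else A $$ (k,l))"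

definition is_cut_edge :: "real mat \<Rightarrow> nat \<Rightarrow> nat \<Rightarrow> bool" where
  "is_cut_edge A i j = (\<not> graph_connected (delete_edge A i j))"

(* Kemeny constant via eigenvalues: eigenvalues (with multiplicity) are the roots of
   the characteristic polynomial over C; remove one copy of lambda_1 = 1 and sum
   1/(1 - lambda_l). *)
definition eigenvalue_list :: "real mat \<Rightarrow> complex list" where
  "eigenvalue_list Q = (SOME as. char_poly (map_mat complex_of_real Q) = (\<Prod>a\<leftarrow>as. [:- a, 1:]))"

definition kemeny :: "real mat \<Rightarrow> complex" where
  "kemeny Q = (\<Sum>z\<leftarrow>remove1 1 (eigenvalue_list Q). 1 / (1 - z))"

definition sym_pos_def :: "real mat \<Rightarrow> bool" where
  "sym_pos_def S = (S \<in> carrier_mat (dim_row S) (dim_row S) \<and> S\<^sup>T = S \<and>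
     (\<forall>x \<in> carrier_vec (dim_row S). x \<noteq> 0\<^sub>v (dim_row S) \<longrightarrow> x \<bullet> (S *\<^sub>v x) > 0))"

end

theory Submission
  imports Defs "Jordan_Normal_Form.Schur_Decomposition"
begin

(*
  Write P = D^-1 A and w = d / ||d||_1, so that S = D (I - P + 1 w^T). Since P 1 = 1 and
  w^T 1 = 1, triangularizing P with the all-ones vector as first basis vector shows that
  I - P + 1 w^T has the eigenvalues 1 and 1 - lambda_l (l >= 2); hence
  K(P) = tr((I - P + 1 w^T)^-1) - 1 = tr(S^-1 D) - 1.
  S is positive definite because x^T S x = 1/2 sum_kl a_kl (x_k - x_l)^2 + (d^T x)^2 / ||d||_1
  and G is connected. The matrix Ahat moves the weight of e onto loops at i and j: it has the
  same degrees, its regularized Laplacian is Shat = S - a_ij v v^T, and Shat is positive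
  definite because G - e is connected. With x = S^-1 v one gets
  x^T Shat x = (x_i - x_j)(1 - alpha), so alpha <> 1, and Sherman-Morrison gives
  Shat^-1 = S^-1 + a_ij / (1 - alpha) x x^T. The Kemeny constants therefore differ by
  tr(a_ij / (1 - alpha) x x^T D) = beta / (1 - alpha).
*)

lemma index_mult_mat_sum:
  assumes "X \<in> carrier_mat n m" "Y \<in> carrier_mat m p" "k < n" "l < p"
  shows "(X * Y) $$ (k,l) = (\<Sum>r<m. X $$ (k,r) * Y $$ (r,l))"
  using assms by (simp add: scalar_prod_def atLeast0LessThan)

lemma index_mult_mat_vec_sum:
  assumes "X \<in> carrier_mat n m" "y \<in> carrier_vec m" "k < n"
  shows "(X *\<^sub>v y) $ k = (\<Sum>l<m. X $$ (k,l) * y $ l)"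
  using assms by (simp add: scalar_prod_def atLeast0LessThan)

lemma scalar_prod_sum:
  assumes "y \<in> carrier_vec n"
  shows "x \<bullet> y = (\<Sum>k<n. x $ k * y $ k)"
  using assms by (simp add: scalar_prod_def atLeast0LessThan)

lemma symmetric_mat_index:
  assumes "B \<in> carrier_mat n n" "B\<^sup>T = B" "k < n" "l < n"
  shows "B $$ (k,l) = B $$ (l,k)"
  using assms by (metis carrier_matD index_transpose_mat(1))

lemma diag_of_carrier [simp]: "diag_of u \<in> carrier_mat (dim_vec u) (dim_vec u)"
  and diag_of_dim [simp]: "dim_row (diag_of u) = dim_vec u" "dim_col (diag_of u) = dim_vec u"
  by (simp_all add: diag_of_def)

lemma diag_of_index [simp]:
  "k < dim_vec u \<Longrightarrow> l < dim_vec u \<Longrightarrow> diag_of u $$ (k,l) = (if k = l then u $ k else 0)"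
  by (simp add: diag_of_def)

lemma outer_carrier [simp]: "outer u w \<in> carrier_mat (dim_vec u) (dim_vec w)"
  and outer_dim [simp]: "dim_row (outer u w) = dim_vec u" "dim_col (outer u w) = dim_vec w"
  by (simp_all add: outer_def)

lemma outer_index [simp]:
  "k < dim_vec u \<Longrightarrow> l < dim_vec w \<Longrightarrow> outer u w $$ (k,l) = u $ k * w $ l"
  by (simp add: outer_def)

lemma diag_of_mult_index:
  assumes "X \<in> carrier_mat (dim_vec u) m" "k < dim_vec u" "l < m"
  shows "(diag_of u * X) $$ (k,l) = u $ k * X $$ (k,l)"
proof -
  have "(diag_of u * X) $$ (k,l) = (\<Sum>r<dim_vec u. diag_of u $$ (k,r) * X $$ (r,l))"
    by (rule index_mult_mat_sum) (use assms in auto)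
  also have "\<dots> = (\<Sum>r<dim_vec u. if r = k then u $ k * X $$ (k,l) else 0)"
    using assms by (intro sum.cong) auto
  finally show ?thesis using assms by simp
qed

lemma degree_vec_dim [simp]: "dim_vec (degree_vec B) = dim_row B"
  by (simp add: degree_vec_def)

lemma degree_vec_index:
  assumes "B \<in> carrier_mat n n" "k < n"
  shows "degree_vec B $ k = (\<Sum>l<n. B $$ (k,l))"
  using assms by (simp add: degree_vec_def ones_vec_def scalar_prod_def atLeast0LessThan)

lemma norm1_eq_sum:
  assumes "\<forall>k<dim_vec d. 0 \<le> d $ k"
  shows "norm1 d = (\<Sum>k<dim_vec d. d $ k)"
  using assms by (auto simp: norm1_def intro!: sum.cong)

lemma norm1_pos:
  assumes "\<forall>k<dim_vec d. 0 < d $ k" and "0 < dim_vec d"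
  shows "0 < norm1 d"
proof -
  have "norm1 d = (\<Sum>k<dim_vec d. d $ k)" using assms(1) by (intro norm1_eq_sum) auto
  also have "0 < \<dots>" by (rule sum_pos) (use assms in auto)
  finally show ?thesis .
qed

subsection \<open>Trace\<close>

definition trace :: "'a::comm_ring_1 mat \<Rightarrow> 'a" where
  "trace X = (\<Sum>k<dim_row X. X $$ (k,k))"

lemma trace_mult_comm:
  assumes X: "X \<in> carrier_mat n m" and Y: "Y \<in> carrier_mat m n"
  shows "trace (X * Y) = trace (Y * X)"
proof -
  have "trace (X * Y) = (\<Sum>k<n. \<Sum>l<m. X $$ (k,l) * Y $$ (l,k))"
    using assms by (simp add: trace_def scalar_prod_def atLeast0LessThan)
  also have "\<dots> = (\<Sum>l<m. \<Sum>k<n. Y $$ (l,k) * X $$ (k,l))"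
    by (subst sum.swap) (simp add: mult.commute)
  also have "\<dots> = trace (Y * X)"
    using assms by (simp add: trace_def scalar_prod_def atLeast0LessThan)
  finally show ?thesis .
qed

lemma trace_similar:
  assumes V: "V \<in> carrier_mat n n" and V': "V' \<in> carrier_mat n n" and N: "N \<in> carrier_mat n n"
    and VV': "V * V' = 1\<^sub>m n"
  shows "trace (V' * N * V) = trace N"
proof -
  have "trace (V' * N * V) = trace (V' * (N * V))"
    using assms by (simp add: assoc_mult_mat[of _ n n])
  also have "\<dots> = trace (N * V * V')"
    using assms by (intro trace_mult_comm) auto
  also have "N * V * V' = N"
    using assms by (simp add: assoc_mult_mat[of _ n n])
  finally show ?thesis .
qed

subsection \<open>Inverses of upper triangular matrices\<close>

lemma upper_triangular_mult_diag:
  assumes X: "X \<in> carrier_mat n n" and U: "U \<in> carrier_mat n n"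
    and "upper_triangular X" "upper_triangular U" and k: "k < n"
  shows "(X * U) $$ (k,k) = X $$ (k,k) * U $$ (k,k)"
proof -
  have "(X * U) $$ (k,k) = (\<Sum>r<n. if r = k then X $$ (k,k) * U $$ (k,k) else 0)"
    unfolding index_mult_mat_sum[OF X U k k]
    by (rule sum.cong) (use assms in \<open>auto simp: upper_triangular_def neq_iff\<close>)
  then show ?thesis using k by simp
qed

lemma upper_triangular_left_inverse:
  fixes X U :: "'a::field mat"
  assumes X: "X \<in> carrier_mat n n" and U: "U \<in> carrier_mat n n"
    and ut: "upper_triangular U" and XU: "X * U = 1\<^sub>m n"
  shows "upper_triangular X"
proof
  have "det U \<noteq> 0" using det_mult[OF X U] XU by (metis det_one mult_zero_right zero_neq_one)
  then have "prod_list (diag_mat U) \<noteq> 0" using det_upper_triangular[OF ut U] by simp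
  moreover have "U $$ (l,l) \<in> set (diag_mat U)" if "l < n" for l
    using U that by (auto simp: diag_mat_def)
  ultimately have U_diag: "U $$ (l,l) \<noteq> 0" if "l < n" for l
    using that by (metis prod_list_zero_iff)
  fix k l assume "l < k" "k < dim_row X"
  then show "X $$ (k,l) = 0"
  proof (induction l rule: less_induct)
    case (less l)
    have kl: "k < n" "l < n" using X less.prems by auto
    have "0 = (X * U) $$ (k,l)" using XU kl less.prems by simp
    also have "\<dots> = (\<Sum>r<n. X $$ (k,r) * U $$ (r,l))" by (rule index_mult_mat_sum[OF X U kl])
    also have "\<dots> = (\<Sum>r<n. if r = l then X $$ (k,l) * U $$ (l,l) else 0)"
      using U less by (intro sum.cong) (auto simp: neq_iff intro: upper_triangularD[OF ut])
    also have "\<dots> = X $$ (k,l) * U $$ (l,l)" using kl by simp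
    finally show ?case using U_diag[OF kl(2)] by simp
  qed
qed

lemma trace_left_inverse_upper_triangular:
  fixes X U :: "'a::field mat"
  assumes X: "X \<in> carrier_mat n n" and U: "U \<in> carrier_mat n n"
    and ut: "upper_triangular U" and XU: "X * U = 1\<^sub>m n"
  shows "trace X = (\<Sum>x\<leftarrow>diag_mat U. 1 / x)"
proof -
  have "X $$ (k,k) = 1 / U $$ (k,k)" if "k < n" for k
    using upper_triangular_mult_diag[OF X U upper_triangular_left_inverse[OF assms] ut that]
      XU that by (auto simp: eq_divide_eq mult.commute)
  then show ?thesis
    using X U by (simp add: trace_def diag_mat_def sum_list_sum_nth atLeast0LessThan)
qed

subsection \<open>Triangularization with a prescribed first column\<close>

lemma first_column_completion:
  fixes u :: "'a::comm_ring_1 vec"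
  assumes u: "u \<in> carrier_vec n" and n: "0 < n" and u0: "u $ 0 = 1"
  obtains W W' where "W \<in> carrier_mat n n" "W' \<in> carrier_mat n n"
    "W * W' = 1\<^sub>m n" "W' * W = 1\<^sub>m n" "col W 0 = u" "W' *\<^sub>v u = unit_vec n 0"
proof
  define E where "E = mat n n (\<lambda>(k,l). if l = 0 \<and> k \<noteq> 0 then u $ k else 0)"
  have E: "E \<in> carrier_mat n n" by (simp add: E_def)
  have EE: "E * E = 0\<^sub>m n n"
    by (rule eq_matI) (auto simp: E_def scalar_prod_def intro!: sum.neutral)
  show "1\<^sub>m n + E \<in> carrier_mat n n" "1\<^sub>m n - E \<in> carrier_mat n n" using E by auto
  have one: "1\<^sub>m n \<in> carrier_mat n n" by simp
  have "(1\<^sub>m n + E) * (1\<^sub>m n - E) = 1\<^sub>m n * (1\<^sub>m n - E) + E * (1\<^sub>m n - E)"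
    using add_mult_distrib_mat[OF one E, of "1\<^sub>m n - E" n] E by (simp add: minus_carrier_mat)
  also have "\<dots> = (1\<^sub>m n - E) + (E * 1\<^sub>m n - E * E)"
    using E by (simp add: mult_minus_distrib_mat[OF E one E])
  finally show "(1\<^sub>m n + E) * (1\<^sub>m n - E) = 1\<^sub>m n" using E EE by (intro eq_matI) auto
  have "(1\<^sub>m n - E) * (1\<^sub>m n + E) = 1\<^sub>m n * (1\<^sub>m n + E) - E * (1\<^sub>m n + E)"
    using minus_mult_distrib_mat[OF one E, of "1\<^sub>m n + E" n] E by simp
  also have "\<dots> = (1\<^sub>m n + E) - (E * 1\<^sub>m n + E * E)"
    using E by (simp add: mult_add_distrib_mat[OF E one E])
  finally show "(1\<^sub>m n - E) * (1\<^sub>m n + E) = 1\<^sub>m n" using E EE by (intro eq_matI) auto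
  show "col (1\<^sub>m n + E) 0 = u"
    using u u0 n by (intro eq_vecI) (auto simp: E_def)
  show "(1\<^sub>m n - E) *\<^sub>v u = unit_vec n 0"
  proof (rule eq_vecI)
    fix k assume "k < dim_vec (unit_vec n 0 :: 'a vec)"
    then have k: "k < n" by simp
    have "((1\<^sub>m n - E) *\<^sub>v u) $ k = (\<Sum>l<n. (if k = l then u $ l else 0) - (if l = 0 \<and> k \<noteq> 0 then u $ k * u $ l else 0))"
      using E u k by (subst index_mult_mat_vec_sum[of _ n n]) (auto simp: E_def left_diff_distrib intro!: sum.cong)
    also have "\<dots> = unit_vec n 0 $ k" using k n u0 by (simp add: sum_subtractf)
    finally show "((1\<^sub>m n - E) *\<^sub>v u) $ k = unit_vec n 0 $ k" .
  qed (use E in simp)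
qed

lemma split_block_first_column_unit:
  fixes Q :: "'a::comm_ring_1 mat"
  assumes Q: "Q \<in> carrier_mat n n" and n: "0 < n"
    and col0: "col Q 0 = e \<cdot>\<^sub>v unit_vec n 0" and split: "split_block Q 1 1 = (A1,A2,A0,A3)"
  shows "Q = four_block_mat (mat 1 1 (\<lambda>_. e)) A2 (0\<^sub>m (n - 1) 1) A3"
    and "A2 \<in> carrier_mat 1 (n - 1)" "A3 \<in> carrier_mat (n - 1) (n - 1)"
    and "char_poly Q = [:-e,1:] * char_poly A3"
proof -
  from Q n have "dim_row Q = 1 + (n - 1)" "dim_col Q = 1 + (n - 1)" by auto
  from split_block[OF split this] have A2: "A2 \<in> carrier_mat 1 (n - 1)"
    and A3: "A3 \<in> carrier_mat (n - 1) (n - 1)" and Q_block: "Q = four_block_mat A1 A2 A0 A3" by auto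
  have Q_col0: "Q $$ (k,0) = (if k = 0 then e else 0)" if "k < n" for k
    using arg_cong[OF col0, of "\<lambda>c. c $ k"] Q n that by simp
  have A1: "A1 = mat 1 1 (\<lambda>_. e)"
    using split[unfolded split_block_def Let_def] Q_col0[of 0] n by (intro eq_matI) auto
  have A0: "A0 = 0\<^sub>m (n - 1) 1"
    using split[unfolded split_block_def Let_def] Q_col0 Q by (intro eq_matI) auto
  show Q_eq: "Q = four_block_mat (mat 1 1 (\<lambda>_. e)) A2 (0\<^sub>m (n - 1) 1) A3"
    using Q_block by (simp add: A1 A0)
  show "A2 \<in> carrier_mat 1 (n - 1)" "A3 \<in> carrier_mat (n - 1) (n - 1)" by (fact A2 A3)+
  have "char_poly Q = char_poly (mat 1 1 (\<lambda>_. e)) * char_poly A3"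
    unfolding Q_eq by (rule char_poly_four_block_zeros_col[OF _ A2 A3]) simp
  also have "char_poly (mat 1 1 (\<lambda>_. e)) = [:-e,1:]" by (simp add: char_poly_defs det_def sign_def)
  finally show "char_poly Q = [:-e,1:] * char_poly A3" .
qed

lemma triangularize_first_column_unit:
  fixes Q :: "'a::conjugatable_ordered_field mat"
  assumes Q: "Q \<in> carrier_mat n n" and n: "0 < n"
    and col0: "col Q 0 = e \<cdot>\<^sub>v unit_vec n 0"
    and cp: "char_poly Q = [:-e,1:] * (\<Prod>a\<leftarrow>rest. [:-a,1:])"
  obtains T P R where "similar_mat_wit Q T P R" "upper_triangular T" "diag_mat T = e # rest"
    "col P 0 = unit_vec n 0"
proof -
  let ?m = "n - 1" and ?A1 = "mat 1 1 (\<lambda>_. e)"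
  obtain A1 A2 A0 A3 where "split_block Q 1 1 = (A1,A2,A0,A3)"
    by (cases "split_block Q 1 1") auto
  note block = split_block_first_column_unit[OF Q n col0 this]
  have A1: "?A1 \<in> carrier_mat 1 1" by simp
  have cp3: "char_poly A3 = (\<Prod>a\<leftarrow>rest. [:-a,1:])"
    using cp block(4) by (metis mult_cancel_left pCons_eq_0_iff zero_neq_one)
  obtain B P' R' where schur: "schur_decomposition A3 rest = (B,P',R')"
    by (cases "schur_decomposition A3 rest") auto
  from schur_decomposition[OF block(3) cp3 schur] have sim3: "similar_mat_wit A3 B P' R'"
    and ut: "upper_triangular B" and diag: "diag_mat B = rest" by auto
  from similar_mat_witD2[OF block(3) sim3] have B: "B \<in> carrier_mat ?m ?m"
    and P': "P' \<in> carrier_mat ?m ?m" and R': "R' \<in> carrier_mat ?m ?m" and "P' * R' = 1\<^sub>m ?m" by auto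
  let ?P = "four_block_mat (1\<^sub>m 1) (0\<^sub>m 1 ?m) (0\<^sub>m ?m 1) P'"
  let ?R = "four_block_mat (1\<^sub>m 1) (0\<^sub>m 1 ?m) (0\<^sub>m ?m 1) R'"
  let ?T = "four_block_mat ?A1 (A2 * P') (0\<^sub>m ?m 1) B"
  show thesis
  proof
    show "similar_mat_wit Q ?T ?P ?R" unfolding block(1)
      by (rule similar_mat_wit_four_block[OF similar_mat_wit_refl[OF A1] sim3])
        (use \<open>P' * R' = 1\<^sub>m ?m\<close> block(2,3) P' R' in auto)
    show "upper_triangular ?T"
      by (rule upper_triangular_four_block[OF _ B]) (auto simp: ut)
    show "diag_mat ?T = e # rest"
      using diag_four_block_mat[OF A1 B] diag by (simp add: diag_mat_def)
    show "col ?P 0 = unit_vec n 0"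
      using P' n by (intro eq_vecI) auto
  qed
qed

lemma triangularize_with_eigenvector:
  fixes Q :: "'a::conjugatable_ordered_field mat"
  assumes Q: "Q \<in> carrier_mat n n" and n: "0 < n"
    and u: "u \<in> carrier_vec n" "u $ 0 = 1" and eig: "Q *\<^sub>v u = e \<cdot>\<^sub>v u"
    and cp: "char_poly Q = [:-e,1:] * (\<Prod>a\<leftarrow>rest. [:-a,1:])"
  obtains T V V' where "similar_mat_wit Q T V V'" "upper_triangular T" "diag_mat T = e # rest"
    "col V 0 = u"
proof -
  obtain W W' where W: "W \<in> carrier_mat n n" and W': "W' \<in> carrier_mat n n"
    and inv: "W * W' = 1\<^sub>m n" "W' * W = 1\<^sub>m n" and colW: "col W 0 = u"
    and W'u: "W' *\<^sub>v u = unit_vec n 0"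
    using first_column_completion[OF u(1) n u(2)] by blast
  define Q' where "Q' = W' * Q * W"
  have Q': "Q' \<in> carrier_mat n n" using W W' Q by (simp add: Q'_def)
  have "W * Q' * W' = (W * W') * Q * (W * W')"
    using W W' Q by (simp add: Q'_def assoc_mult_mat[of _ n n _ n _ n])
  then have sim: "similar_mat_wit Q Q' W W'"
    using W W' Q Q' inv by (auto intro!: similar_mat_witI)
  have "col Q' 0 = (W' * Q) *\<^sub>v col W 0"
    unfolding Q'_def by (rule col_mult2) (use W W' Q n in auto)
  also have "\<dots> = W' *\<^sub>v (Q *\<^sub>v u)" using W W' Q u by (simp add: colW)
  also have "\<dots> = e \<cdot>\<^sub>v unit_vec n 0" using W' u by (simp add: eig mult_mat_vec W'u)
  finally have col0: "col Q' 0 = e \<cdot>\<^sub>v unit_vec n 0" .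
  have "char_poly Q' = char_poly Q"
    using char_poly_similar similar_mat_wit_sym[OF sim] unfolding similar_mat_def by blast
  then obtain T P R where sim': "similar_mat_wit Q' T P R" and T: "upper_triangular T" "diag_mat T = e # rest"
    and colP: "col P 0 = unit_vec n 0"
    using triangularize_first_column_unit[OF Q' n col0] cp by metis
  have P: "P \<in> carrier_mat n n" using similar_mat_witD2[OF Q' sim'] by simp
  have "col (W * P) 0 = W *\<^sub>v unit_vec n 0" unfolding colP[symmetric] by (rule col_mult2[OF W P n])
  also have "\<dots> = u" using W n colW by (intro eq_vecI) auto
  finally show thesis using that similar_mat_wit_trans[OF sim sim'] T by blast
qed

subsection \<open>The Kemeny constant as a trace\<close>

lemma char_poly_split_eigenvalue:
  fixes Q :: "'a::idom mat"
  assumes Q: "Q \<in> carrier_mat n n" and "poly (char_poly Q) e = 0"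
    and cp: "char_poly Q = (\<Prod>a\<leftarrow>es. [:-a,1:])"
  shows "char_poly Q = [:-e,1:] * (\<Prod>a\<leftarrow>remove1 e es. [:-a,1:])"
proof -
  have "e \<in> set es" using assms(2) unfolding cp poly_prod_list_zero_iff by auto
  then show ?thesis unfolding cp using prod_list_map_remove1[of e es "\<lambda>a. [:-a,1:]"] by simp
qed

lemma similar_outer_first_column:
  fixes V V' :: "'a::comm_ring_1 mat"
  assumes V: "V \<in> carrier_mat n n" and V': "V' \<in> carrier_mat n n" and inv: "V' * V = 1\<^sub>m n"
    and n: "0 < n" and u: "col V 0 = u" and w: "w \<in> carrier_vec n"
  shows "V' * mat n n (\<lambda>(k,l). u $ k * w $ l) * V = mat n n (\<lambda>(k,l). if k = 0 then w \<bullet> col V l else 0)"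
proof -
  have "V *\<^sub>v unit_vec n 0 = u" unfolding u[symmetric] using V n by (intro eq_vecI) auto
  then have V'u: "V' *\<^sub>v u = unit_vec n 0" using V V' inv by (auto simp flip: assoc_mult_mat_vec)
  have "V' * mat n n (\<lambda>(k,l). u $ k * w $ l) = mat n n (\<lambda>(k,l). if k = 0 then w $ l else 0)"
  proof (rule eq_matI)
    fix k l assume "k < dim_row (mat n n (\<lambda>(k,l). if k = 0 then w $ l else (0::'a)))"
      "l < dim_col (mat n n (\<lambda>(k,l). if k = 0 then w $ l else (0::'a)))"
    then have kl: "k < n" "l < n" by auto
    have "(V' * mat n n (\<lambda>(k,l). u $ k * w $ l)) $$ (k,l) = (V' *\<^sub>v u) $ k * w $ l"
      using V' kl u V by (auto simp: scalar_prod_def sum_distrib_right mult.assoc)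
    then show "(V' * mat n n (\<lambda>(k,l). u $ k * w $ l)) $$ (k,l) = mat n n (\<lambda>(k,l). if k = 0 then w $ l else 0) $$ (k,l)"
      using kl by (simp add: V'u)
  qed (use V' in auto)
  also have "\<dots> * V = mat n n (\<lambda>(k,l). if k = 0 then w \<bullet> col V l else 0)"
    using V w by (intro eq_matI) (auto simp: scalar_prod_def)
  finally show ?thesis .
qed

(* Brauer's theorem in triangular form: the rank-one term u w^T only moves the eigenvalue e
   of the eigenvector u. *)
lemma triangular_rank_one_update:
  fixes Q :: "'a::comm_ring_1 mat"
  assumes sim: "similar_mat_wit Q T V V'" and Q: "Q \<in> carrier_mat n n" and n: "0 < n"
    and ut: "upper_triangular T" and diag: "diag_mat T = e # rest"
    and u: "col V 0 = u" and w: "w \<in> carrier_vec n"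
  defines "U \<equiv> V' * (1\<^sub>m n - Q + mat n n (\<lambda>(k,l). u $ k * w $ l)) * V"
  shows "upper_triangular U" "diag_mat U = (1 - e + w \<bullet> u) # map (\<lambda>z. 1 - z) rest"
proof -
  from similar_mat_witD2[OF Q sim] have V: "V \<in> carrier_mat n n" and V': "V' \<in> carrier_mat n n"
    and T: "T \<in> carrier_mat n n" and inv: "V * V' = 1\<^sub>m n" "V' * V = 1\<^sub>m n" and QT: "Q = V * T * V'"
    by auto
  note J = similar_outer_first_column[OF V V' inv(2) n u w]
  have "V' * Q * V = (V' * V) * T * (V' * V)"
    using V V' T by (simp add: QT assoc_mult_mat[of _ n n _ n _ n])
  then have "V' * Q * V = T" using T inv by simp
  let ?J = "mat n n (\<lambda>(k,l). u $ k * w $ l)"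
  have "V' * (1\<^sub>m n - Q + ?J) = V' * (1\<^sub>m n - Q) + V' * ?J"
    by (rule mult_add_distrib_mat[OF V']) (use Q in \<open>auto simp: minus_carrier_mat\<close>)
  also have "V' * (1\<^sub>m n - Q) = V' - V' * Q"
    using mult_minus_distrib_mat[OF V', of "1\<^sub>m n" n Q] V' Q by simp
  finally have "U = (V' - V' * Q + V' * ?J) * V" by (simp add: U_def)
  also have "\<dots> = (V' - V' * Q) * V + V' * ?J * V"
    by (rule add_mult_distrib_mat) (use V V' Q in \<open>auto simp: minus_carrier_mat\<close>)
  also have "(V' - V' * Q) * V = V' * V - V' * Q * V"
    by (rule minus_mult_distrib_mat) (use V V' Q in auto)
  finally have U_eq: "U = 1\<^sub>m n - T + mat n n (\<lambda>(k,l). if k = 0 then w \<bullet> col V l else 0)"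
    using inv J \<open>V' * Q * V = T\<close> by simp
  show "upper_triangular U" using ut T by (auto simp: U_eq upper_triangular_def)
  have U_diag: "diag_mat U ! k = 1 - (e # rest) ! k + (if k = 0 then w \<bullet> u else 0)" if "k < n" for k
    using T that u by (simp add: U_eq diag[symmetric] diag_mat_def)
  have len: "length (diag_mat U) = n" "length rest = n - 1"
    using arg_cong[OF diag, of length] T by (simp_all add: U_eq diag_mat_def)
  show "diag_mat U = (1 - e + w \<bullet> u) # map (\<lambda>z. 1 - z) rest"
  proof (rule nth_equalityI)
    fix k assume "k < length (diag_mat U)"
    then show "diag_mat U ! k = ((1 - e + w \<bullet> u) # map (\<lambda>z. 1 - z) rest) ! k"
      using U_diag len by (cases k) auto
  qed (use len n in simp)
qed

lemma left_inverse_conjugate: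
  fixes N M V V' :: "'a::semiring_1 mat"
  assumes "N \<in> carrier_mat n n" "M \<in> carrier_mat n n" "V \<in> carrier_mat n n" "V' \<in> carrier_mat n n"
    and "N * M = 1\<^sub>m n" "V * V' = 1\<^sub>m n" "V' * V = 1\<^sub>m n"
  shows "(V' * N * V) * (V' * M * V) = 1\<^sub>m n"
proof -
  have "(V' * N * V) * (V' * M * V) = V' * N * (V * V') * M * V"
    using assms(1-4) by (simp add: assoc_mult_mat[of _ n n _ n _ n])
  also have "\<dots> = V' * N * M * V"
    using assms(1-4) by (simp add: assms(6) right_mult_one_mat[of "V' * N" n n])
  also have "\<dots> = V' * (N * M) * V" using assms by (simp only: assoc_mult_mat[of V' n n N n M n])
  also have "\<dots> = 1\<^sub>m n" using assms by simp
  finally show ?thesis .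
qed

lemma sum_inverse_eigenvalues_eq_trace:
  fixes Q N :: "'a::conjugatable_ordered_field mat" and w :: "'a vec"
  assumes Q: "Q \<in> carrier_mat n n" and n: "0 < n"
    and stoch: "Q *\<^sub>v vec n (\<lambda>_. 1) = vec n (\<lambda>_. 1)"
    and w: "w \<in> carrier_vec n" "w \<bullet> vec n (\<lambda>_. 1) = 1"
    and cp: "char_poly Q = (\<Prod>a\<leftarrow>es. [:-a,1:])"
    and N: "N \<in> carrier_mat n n" and inv: "N * (1\<^sub>m n - Q + mat n n (\<lambda>(k,l). w $ l)) = 1\<^sub>m n"
  shows "(\<Sum>z\<leftarrow>remove1 1 es. 1 / (1 - z)) = trace N - 1"
proof -
  let ?one = "vec n (\<lambda>_. 1::'a)"
  have "eigenvector Q ?one 1" using Q stoch n by (auto simp: eigenvector_def vec_eq_iff)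
  then have "poly (char_poly Q) 1 = 0"
    using eigenvalue_root_char_poly[OF Q] eigenvalue_def by blast
  then have cp1: "char_poly Q = [:-1,1:] * (\<Prod>a\<leftarrow>remove1 1 es. [:-a,1:])"
    by (rule char_poly_split_eigenvalue[OF Q _ cp])
  have eig: "Q *\<^sub>v ?one = 1 \<cdot>\<^sub>v ?one" using stoch by simp
  obtain T V V' where sim: "similar_mat_wit Q T V V'" and ut: "upper_triangular T"
    and diag: "diag_mat T = 1 # remove1 1 es" and colV: "col V 0 = ?one"
    using triangularize_with_eigenvector[OF Q n _ _ eig cp1] n by auto
  from similar_mat_witD2[OF Q sim] have V: "V \<in> carrier_mat n n" and V': "V' \<in> carrier_mat n n"
    and VV': "V * V' = 1\<^sub>m n" "V' * V = 1\<^sub>m n" by auto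
  define M where "M = 1\<^sub>m n - Q + mat n n (\<lambda>(k,l). ?one $ k * w $ l)"
  have M: "M \<in> carrier_mat n n" using Q by (simp add: M_def minus_carrier_mat)
  have "mat n n (\<lambda>(k,l). ?one $ k * w $ l) = mat n n (\<lambda>(k,l). w $ l)" by (rule eq_matI) auto
  then have NM: "N * M = 1\<^sub>m n" using inv by (simp add: M_def)
  define U where "U = V' * M * V"
  have U: "U \<in> carrier_mat n n" using V V' M by (simp add: U_def)
  have XU: "(V' * N * V) * U = 1\<^sub>m n"
    unfolding U_def by (rule left_inverse_conjugate[OF N M V V' NM VV'])
  have "trace N = trace (V' * N * V)" using trace_similar[OF V V' N VV'(1)] by simp
  also have "\<dots> = (\<Sum>x\<leftarrow>diag_mat U. 1 / x)"
    using trace_left_inverse_upper_triangular[OF _ U _ XU] triangular_rank_one_update(1)[OF sim Q n ut diag colV w(1)]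
      V V' N by (simp add: U_def M_def)
  also have "\<dots> = 1 + (\<Sum>z\<leftarrow>remove1 1 es. 1 / (1 - z))"
    using triangular_rank_one_update(2)[OF sim Q n ut diag colV w(1)] w
    by (simp add: U_def M_def comp_def)
  finally show ?thesis by simp
qed

lemma char_poly_eigenvalue_list:
  assumes "Q \<in> carrier_mat n n"
  shows "char_poly (map_mat complex_of_real Q) = (\<Prod>a\<leftarrow>eigenvalue_list Q. [:-a,1:])"
proof -
  have "\<exists>as. char_poly (map_mat complex_of_real Q) = (\<Prod>a\<leftarrow>as. [:-a,1:])"
    using char_poly_factorized[of "map_mat complex_of_real Q" n] assms by auto
  then show ?thesis unfolding eigenvalue_list_def by (rule someI_ex)
qed

(* For w the stationary distribution, N is the fundamental matrix of Kemeny and Snell;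
   any w with w^T 1 = 1 will do. *)
lemma kemeny_eq_trace_fundamental:
  fixes Q N :: "real mat" and w :: "real vec"
  assumes Q: "Q \<in> carrier_mat n n" and n: "0 < n"
    and stoch: "Q *\<^sub>v vec n (\<lambda>_. 1) = vec n (\<lambda>_. 1)"
    and w: "w \<in> carrier_vec n" "w \<bullet> vec n (\<lambda>_. 1) = 1"
    and N: "N \<in> carrier_mat n n" and inv: "N * (1\<^sub>m n - Q + mat n n (\<lambda>(k,l). w $ l)) = 1\<^sub>m n"
  shows "kemeny Q = complex_of_real (trace N - 1)"
proof -
  let ?c = "map_mat complex_of_real" and ?one = "vec n (\<lambda>_. 1)"
  have stoch_c: "?c Q *\<^sub>v ?one = ?one"
  proof (rule eq_vecI)
    fix k assume "k < dim_vec (?one :: complex vec)"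
    then have "(?c Q *\<^sub>v ?one) $ k = complex_of_real ((Q *\<^sub>v ?one) $ k)"
      using Q by (simp add: scalar_prod_def)
    then show "(?c Q *\<^sub>v ?one) $ k = ?one $ k" using \<open>k < _\<close> by (simp add: stoch)
  qed (use Q in simp)
  have w_c: "map_vec complex_of_real w \<bullet> ?one = 1"
    using w by (simp add: scalar_prod_def flip: of_real_sum)
  have c_M: "?c (1\<^sub>m n - Q + mat n n (\<lambda>(k,l). w $ l))
      = 1\<^sub>m n - ?c Q + mat n n (\<lambda>(k,l). map_vec complex_of_real w $ l)"
    using Q w by (intro eq_matI) auto
  have "?c N * ?c (1\<^sub>m n - Q + mat n n (\<lambda>(k,l). w $ l)) = ?c (N * (1\<^sub>m n - Q + mat n n (\<lambda>(k,l). w $ l)))"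
    by (rule of_real_hom.mat_hom_mult[OF N, of _ n, symmetric]) (use Q in \<open>simp add: minus_carrier_mat\<close>)
  then have inv_c: "?c N * (1\<^sub>m n - ?c Q + mat n n (\<lambda>(k,l). map_vec complex_of_real w $ l)) = 1\<^sub>m n"
    by (simp only: c_M inv of_real_hom.mat_hom_one)
  have "trace (?c N) = complex_of_real (trace N)" using N by (simp add: trace_def)
  then show ?thesis
    using sum_inverse_eigenvalues_eq_trace[OF _ n stoch_c _ w_c char_poly_eigenvalue_list[OF Q] _ inv_c] Q N w
    by (simp add: kemeny_def)
qed

definition regularized_laplacian :: "real mat \<Rightarrow> real mat" where
  "regularized_laplacian B = diag_of (degree_vec B) - B
     + (1 / norm1 (degree_vec B)) \<cdot>\<^sub>m outer (degree_vec B) (degree_vec B)"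

lemma regularized_laplacian_carrier:
  assumes "B \<in> carrier_mat n n"
  shows "regularized_laplacian B \<in> carrier_mat n n"
proof -
  have "dim_vec (degree_vec B) = n" using assms by simp
  then show ?thesis unfolding regularized_laplacian_def
    using assms diag_of_carrier[of "degree_vec B"] outer_carrier[of "degree_vec B" "degree_vec B"]
    by (intro add_carrier_mat minus_carrier_mat smult_carrier_mat) simp_all
qed

lemma regularized_laplacian_index:
  assumes "B \<in> carrier_mat n n" "k < n" "l < n"
  shows "regularized_laplacian B $$ (k,l) = (if k = l then degree_vec B $ k else 0) - B $$ (k,l)
    + degree_vec B $ k * degree_vec B $ l / norm1 (degree_vec B)"
  using assms by (simp add: regularized_laplacian_def)

lemma diag_of_mult_inverse:
  assumes "\<forall>k<dim_vec d. d $ k \<noteq> 0"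
  shows "diag_of d * diag_of (map_vec inverse d) = 1\<^sub>m (dim_vec d)"
proof (rule eq_matI)
  fix k l assume "k < dim_row (1\<^sub>m (dim_vec d) :: real mat)" "l < dim_col (1\<^sub>m (dim_vec d) :: real mat)"
  then show "(diag_of d * diag_of (map_vec inverse d)) $$ (k,l) = 1\<^sub>m (dim_vec d) $$ (k,l)"
    using assms diag_of_carrier[of "map_vec inverse d"] by (subst diag_of_mult_index) auto
qed simp_all

lemma transition_mat_index:
  assumes "B \<in> carrier_mat n n" "k < n" "l < n"
  shows "(diag_of (map_vec inverse (degree_vec B)) * B) $$ (k,l) = B $$ (k,l) / degree_vec B $ k"
  using assms by (subst diag_of_mult_index) (auto simp: divide_inverse)

lemma transition_mat_stochastic:
  assumes B: "B \<in> carrier_mat n n" and d_pos: "\<forall>k<n. 0 < degree_vec B $ k"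
  shows "(diag_of (map_vec inverse (degree_vec B)) * B) *\<^sub>v vec n (\<lambda>_. 1) = vec n (\<lambda>_. 1)"
proof (rule eq_vecI)
  let ?Q = "diag_of (map_vec inverse (degree_vec B)) * B"
  have Q: "?Q \<in> carrier_mat n n" using B diag_of_carrier[of "map_vec inverse (degree_vec B)"] by simp
  fix k assume "k < dim_vec (vec n (\<lambda>_. 1::real))"
  then have k: "k < n" by simp
  have "(?Q *\<^sub>v vec n (\<lambda>_. 1)) $ k = (\<Sum>l<n. ?Q $$ (k,l) * vec n (\<lambda>_. 1) $ l)"
    by (rule index_mult_mat_vec_sum[OF Q _ k]) simp
  also have "\<dots> = (\<Sum>l<n. B $$ (k,l) / degree_vec B $ k)"
    by (intro sum.cong) (simp_all add: transition_mat_index[OF B k])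
  also have "\<dots> = (\<Sum>l<n. B $$ (k,l)) / degree_vec B $ k" by (simp add: sum_divide_distrib)
  also have "\<dots> = 1" using d_pos[rule_format, OF k] by (simp add: degree_vec_index[OF B k, symmetric])
  finally show "(?Q *\<^sub>v vec n (\<lambda>_. 1)) $ k = vec n (\<lambda>_. 1) $ k" using k by simp
qed (use B in simp)

lemma inverse_degree_mult_regularized_laplacian:
  assumes B: "B \<in> carrier_mat n n" and d_pos: "\<forall>k<n. 0 < degree_vec B $ k"
  defines "d \<equiv> degree_vec B"
  shows "diag_of (map_vec inverse d) * regularized_laplacian B
    = 1\<^sub>m n - diag_of (map_vec inverse d) * B + mat n n (\<lambda>(k,l). ((1 / norm1 d) \<cdot>\<^sub>v d) $ l)"
    (is "_ = ?M")
proof (rule eq_matI)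
  have d: "dim_vec d = n" using B by (simp add: d_def)
  have S: "regularized_laplacian B \<in> carrier_mat n n" by (rule regularized_laplacian_carrier[OF B])
  fix k l assume "k < dim_row ?M" "l < dim_col ?M"
  then have kl: "k < n" "l < n" using B by auto
  have "(diag_of (map_vec inverse d) * regularized_laplacian B) $$ (k,l)
      = inverse (d $ k) * regularized_laplacian B $$ (k,l)"
    using d kl S by (subst diag_of_mult_index) auto
  also have "\<dots> = ?M $$ (k,l)"
    using kl d_pos d B diag_of_carrier[of "map_vec inverse d"] transition_mat_index[OF B kl]
    by (auto simp del: index_mult_mat(1) simp: regularized_laplacian_index[OF B kl] d_def[symmetric] field_simps)
  finally show "(diag_of (map_vec inverse d) * regularized_laplacian B) $$ (k,l) = ?M $$ (k,l)" .
qed (use B regularized_laplacian_carrier[OF B] in \<open>auto simp: d_def\<close>)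

lemma kemeny_eq_trace_regularized_laplacian:
  assumes B: "B \<in> carrier_mat n n" and n: "0 < n" and d_pos: "\<forall>k<n. 0 < degree_vec B $ k"
    and Sinv: "Sinv \<in> carrier_mat n n" and inv: "Sinv * regularized_laplacian B = 1\<^sub>m n"
  shows "kemeny (diag_of (map_vec inverse (degree_vec B)) * B)
    = complex_of_real (trace (Sinv * diag_of (degree_vec B)) - 1)"
proof -
  define d where "d = degree_vec B"
  let ?D = "diag_of d" and ?Dinv = "diag_of (map_vec inverse d)"
  let ?Q = "?Dinv * B" and ?w = "(1 / norm1 d) \<cdot>\<^sub>v d"
  have d: "dim_vec d = n" "\<forall>k<dim_vec d. 0 < d $ k" using B d_pos by (simp_all add: d_def)
  have D: "?D \<in> carrier_mat n n" and Dinv: "?Dinv \<in> carrier_mat n n"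
    using diag_of_carrier[of d] diag_of_carrier[of "map_vec inverse d"] d by auto
  have S: "regularized_laplacian B \<in> carrier_mat n n" by (rule regularized_laplacian_carrier[OF B])
  have w: "?w \<in> carrier_vec n" "?w \<bullet> vec n (\<lambda>_. 1) = 1"
    using d norm1_pos[OF d(2)] n
    by (auto simp: scalar_prod_def atLeast0LessThan norm1_eq_sum less_imp_le simp flip: sum_divide_distrib)
  have "Sinv * ?D * (1\<^sub>m n - ?Q + mat n n (\<lambda>(k,l). ?w $ l)) = Sinv * (?D * ?Dinv) * regularized_laplacian B"
    using Sinv D Dinv S
    by (simp add: inverse_degree_mult_regularized_laplacian[OF B d_pos, folded d_def, symmetric]
        assoc_mult_mat[of _ n n _ n _ n])
  also have "?D * ?Dinv = 1\<^sub>m n" using diag_of_mult_inverse[of d] d by force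
  also have "Sinv * 1\<^sub>m n * regularized_laplacian B = 1\<^sub>m n" using Sinv by (simp add: inv)
  finally show ?thesis
    using kemeny_eq_trace_fundamental[OF _ n transition_mat_stochastic[OF B d_pos] w] Sinv D Dinv B
    by (simp add: d_def)
qed

subsection \<open>Positive definiteness\<close>

lemma sum_weighted_squared_differences:
  fixes b :: "nat \<Rightarrow> nat \<Rightarrow> real"
  assumes sym: "\<And>k l. k < n \<Longrightarrow> l < n \<Longrightarrow> b k l = b l k"
  shows "(\<Sum>k<n. \<Sum>l<n. b k l * (y k - y l)^2) =
         2 * ((\<Sum>k<n. (\<Sum>l<n. b k l) * (y k)^2) - (\<Sum>k<n. \<Sum>l<n. b k l * y k * y l))"
proof -
  have swap: "(\<Sum>k<n. \<Sum>l<n. b k l * (y l)^2) = (\<Sum>k<n. (\<Sum>l<n. b k l) * (y k)^2)"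
  proof -
    have "(\<Sum>k<n. \<Sum>l<n. b k l * (y l)^2) = (\<Sum>l<n. \<Sum>k<n. b l k * (y l)^2)"
      using sym by (subst sum.swap) (auto intro!: sum.cong)
    then show ?thesis by (simp add: sum_distrib_right)
  qed
  have "(\<Sum>k<n. \<Sum>l<n. b k l * (y k - y l)^2) =
        (\<Sum>k<n. \<Sum>l<n. b k l * (y k)^2) + (\<Sum>k<n. \<Sum>l<n. b k l * (y l)^2)
          - 2 * (\<Sum>k<n. \<Sum>l<n. b k l * y k * y l)"
    by (simp add: power2_diff algebra_simps sum.distrib sum_subtractf sum_distrib_left)
  then show ?thesis by (simp add: swap sum_distrib_right)
qed

lemma quadratic_form_regularized_laplacian:
  assumes B: "B \<in> carrier_mat n n" and sym: "B\<^sup>T = B" and x: "x \<in> carrier_vec n"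
  shows "x \<bullet> (regularized_laplacian B *\<^sub>v x) =
    (\<Sum>k<n. \<Sum>l<n. B $$ (k,l) * (x $ k - x $ l)^2) / 2
    + (degree_vec B \<bullet> x)^2 / norm1 (degree_vec B)"
proof -
  define d where "d = degree_vec B"
  have "x \<bullet> (regularized_laplacian B *\<^sub>v x) = (\<Sum>k<n. \<Sum>l<n. x $ k * regularized_laplacian B $$ (k,l) * x $ l)"
    using regularized_laplacian_carrier[OF B] x
    by (simp add: scalar_prod_def atLeast0LessThan sum_distrib_left mult.assoc)
  also have "\<dots> = (\<Sum>k<n. d $ k * (x $ k)^2)
      - (\<Sum>k<n. \<Sum>l<n. B $$ (k,l) * x $ k * x $ l)
      + (\<Sum>k<n. \<Sum>l<n. (d $ k * x $ k) * (d $ l * x $ l) / norm1 d)"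
    by (simp add: regularized_laplacian_index[OF B] d_def[symmetric] sum.distrib sum_subtractf
        algebra_simps power2_eq_square if_distrib[of "\<lambda>t. t * _"] if_distrib[of "\<lambda>t. _ * t"] cong: if_cong)
  also have "(\<Sum>k<n. \<Sum>l<n. (d $ k * x $ k) * (d $ l * x $ l) / norm1 d) = (d \<bullet> x)^2 / norm1 d"
    using x by (simp add: scalar_prod_def atLeast0LessThan power2_eq_square sum_product sum_divide_distrib)
  also have "(\<Sum>k<n. d $ k * (x $ k)^2) = (\<Sum>k<n. (\<Sum>l<n. B $$ (k,l)) * (x $ k)^2)"
    using B by (simp add: d_def degree_vec_index)
  finally show ?thesis
    using sum_weighted_squared_differences[of n "\<lambda>k l. B $$ (k,l)" "\<lambda>k. x $ k"] symmetric_mat_index[OF B sym]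
    by (simp add: d_def)
qed

lemma graph_connected_imp_const:
  assumes "graph_connected B" and edge: "\<And>k l. adj_rel B k l \<Longrightarrow> f k = f l"
    and "k < dim_row B" "l < dim_row B"
  shows "f k = f l"
proof -
  have "(adj_rel B)\<^sup>*\<^sup>* k l" using assms by (simp add: graph_connected_def)
  then show ?thesis by (induction rule: rtranclp_induct) (auto dest: edge)
qed

lemma double_sum_nonneg_eq_0:
  fixes f :: "nat \<Rightarrow> nat \<Rightarrow> 'a::ordered_comm_monoid_add"
  assumes nonneg: "\<And>k l. k < n \<Longrightarrow> l < n \<Longrightarrow> 0 \<le> f k l"
    and sum: "(\<Sum>k<n. \<Sum>l<n. f k l) = 0" and "k < n" "l < n"
  shows "f k l = 0"
proof -
  have "(\<Sum>p\<in>{..<n} \<times> {..<n}. case p of (k,l) \<Rightarrow> f k l) = 0"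
    using sum by (simp add: sum.cartesian_product)
  then have "\<forall>p\<in>{..<n} \<times> {..<n}. (case p of (k,l) \<Rightarrow> f k l) = 0"
    by (subst (asm) sum_nonneg_eq_0_iff) (auto simp: nonneg)
  then show ?thesis using \<open>k < n\<close> \<open>l < n\<close> by auto
qed

lemma regularized_laplacian_pos:
  assumes B: "B \<in> carrier_mat n n" and sym: "B\<^sup>T = B" and nonneg: "\<forall>k<n. \<forall>l<n. 0 \<le> B $$ (k,l)"
    and d_pos: "\<forall>k<n. 0 < degree_vec B $ k" and conn: "graph_connected B"
    and x: "x \<in> carrier_vec n" "x \<noteq> 0\<^sub>v n"
  shows "0 < x \<bullet> (regularized_laplacian B *\<^sub>v x)"
proof (rule ccontr)
  define d where "d = degree_vec B"
  let ?q = "\<lambda>k l. B $$ (k,l) * (x $ k - x $ l)^2"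
  have q_nonneg: "0 \<le> ?q k l" if "k < n" "l < n" for k l using nonneg that by simp
  have d: "dim_vec d = n" "\<forall>k<dim_vec d. 0 < d $ k" using B d_pos by (simp_all add: d_def)
  have n: "0 < n" using x by (auto intro!: Nat.gr0I)
  then have "0 < norm1 d" using norm1_pos[OF d(2)] d by simp
  moreover assume "\<not> 0 < x \<bullet> (regularized_laplacian B *\<^sub>v x)"
  moreover have "0 \<le> (\<Sum>k<n. \<Sum>l<n. ?q k l)" using q_nonneg by (intro sum_nonneg) auto
  moreover have "0 \<le> (d \<bullet> x)^2 / norm1 d" using \<open>0 < norm1 d\<close> by simp
  ultimately have "(\<Sum>k<n. \<Sum>l<n. ?q k l) = 0" and "(d \<bullet> x)^2 / norm1 d = 0"
    using quadratic_form_regularized_laplacian[OF B sym x(1)] unfolding d_def by linarith+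
  then have dx: "d \<bullet> x = 0" and q_sum: "(\<Sum>k<n. \<Sum>l<n. ?q k l) = 0"
    using \<open>0 < norm1 d\<close> by simp_all
  have "x $ k = x $ l" if "adj_rel B k l" for k l
    using that B double_sum_nonneg_eq_0[of n ?q, OF q_nonneg q_sum] by (force simp: adj_rel_def)
  then have const: "x $ k = x $ 0" if "k < n" for k
    using graph_connected_imp_const[OF conn, of "\<lambda>k. x $ k" k 0] B that n by simp
  have "d \<bullet> x = (\<Sum>k<n. d $ k) * x $ 0"
    unfolding scalar_prod_sum[OF x(1)] sum_distrib_right by (rule sum.cong) (metis const lessThan_iff)+
  then have "x $ 0 = 0"
    using dx d \<open>0 < norm1 d\<close> by (simp add: norm1_eq_sum less_imp_le)
  then show False using x const by (auto simp: vec_eq_iff)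
qed

lemma sym_pos_def_regularized_laplacian:
  assumes B: "B \<in> carrier_mat n n" and sym: "B\<^sup>T = B" and nonneg: "\<forall>k<n. \<forall>l<n. 0 \<le> B $$ (k,l)"
    and d_pos: "\<forall>k<n. 0 < degree_vec B $ k" and conn: "graph_connected B"
  shows "sym_pos_def (regularized_laplacian B)"
proof -
  have S: "regularized_laplacian B \<in> carrier_mat n n" by (rule regularized_laplacian_carrier[OF B])
  have "(regularized_laplacian B)\<^sup>T = regularized_laplacian B"
    using S symmetric_mat_index[OF B sym]
    by (intro eq_matI) (auto simp: regularized_laplacian_index[OF B] mult.commute)
  then show ?thesis
    using S regularized_laplacian_pos[OF B sym nonneg d_pos conn] by (simp add: sym_pos_def_def)
qed

subsection \<open>Rank-one updates\<close>

lemma smult_outer_mult_vec: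
  assumes "y \<in> carrier_vec (dim_vec w)"
  shows "(c \<cdot>\<^sub>m outer u w) *\<^sub>v y = (c * (w \<bullet> y)) \<cdot>\<^sub>v u"
  using assms by (intro eq_vecI) (auto simp: scalar_prod_def sum_distrib_left algebra_simps)

lemma quadratic_form_rank_one_update:
  assumes S: "S \<in> carrier_mat n n" and x: "x \<in> carrier_vec n" and Sx: "S *\<^sub>v x = v"
  shows "x \<bullet> ((S - a \<cdot>\<^sub>m outer v v) *\<^sub>v x) = (v \<bullet> x) * (1 - a * (v \<bullet> x))"
proof -
  have v: "v \<in> carrier_vec n" using S x Sx by auto
  have "a \<cdot>\<^sub>m outer v v \<in> carrier_mat n n" using v by auto
  then have "(S - a \<cdot>\<^sub>m outer v v) *\<^sub>v x = v - (a * (v \<bullet> x)) \<cdot>\<^sub>v v"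
    using S x v by (simp add: minus_mult_distrib_mat_vec[OF S _ x] smult_outer_mult_vec Sx)
  then show ?thesis
    using x v by (simp add: scalar_prod_minus_distrib[of _ n] comm_scalar_prod[of x n v] algebra_simps)
qed

lemma sherman_morrison:
  fixes S Sinv :: "real mat"
  assumes S: "S \<in> carrier_mat n n" and Sinv: "Sinv \<in> carrier_mat n n" and inv: "Sinv * S = 1\<^sub>m n"
    and sym: "S\<^sup>T = S" and x: "x \<in> carrier_vec n" and Sx: "S *\<^sub>v x = v"
    and denom: "a * (v \<bullet> x) \<noteq> 1"
  shows "(Sinv + (a / (1 - a * (v \<bullet> x))) \<cdot>\<^sub>m outer x x) * (S - a \<cdot>\<^sub>m outer v v) = 1\<^sub>m n"
proof -
  define c where "c = a / (1 - a * (v \<bullet> x))"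
  have c: "c * (1 - a * (v \<bullet> x)) = a" using denom by (simp add: c_def)
  have v: "v \<in> carrier_vec n" using S x Sx by auto
  have vx: "v \<bullet> x = (\<Sum>m<n. x $ m * v $ m)" using x by (simp add: scalar_prod_sum mult.commute)
  have Sinv_S: "(\<Sum>m<n. Sinv $$ (k,m) * S $$ (m,l)) = (if k = l then 1 else 0)" if "k < n" "l < n" for k l
    using index_mult_mat_sum[OF Sinv S that] inv that by simp
  have "Sinv *\<^sub>v v = x" using Sinv S x inv by (simp flip: Sx assoc_mult_mat_vec)
  then have Sinv_v: "(\<Sum>m<n. Sinv $$ (k,m) * v $ m) = x $ k" if "k < n" for k
    using index_mult_mat_vec_sum[OF Sinv v that] by simp
  have x_S: "(\<Sum>m<n. x $ m * S $$ (m,l)) = v $ l" if "l < n" for l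
  proof -
    have "(\<Sum>m<n. x $ m * S $$ (m,l)) = (\<Sum>m<n. S $$ (l,m) * x $ m)"
      using symmetric_mat_index[OF S sym _ that] by (intro sum.cong) (auto simp: mult.commute)
    also have "\<dots> = v $ l" using index_mult_mat_vec_sum[OF S x that] by (simp add: Sx)
    finally show ?thesis .
  qed
  show ?thesis unfolding c_def[symmetric]
  proof (rule eq_matI)
    fix k l assume "k < dim_row (1\<^sub>m n :: real mat)" "l < dim_col (1\<^sub>m n :: real mat)"
    then have kl: "k < n" "l < n" by auto
    have "((Sinv + c \<cdot>\<^sub>m outer x x) * (S - a \<cdot>\<^sub>m outer v v)) $$ (k,l)
        = (\<Sum>m<n. (Sinv $$ (k,m) + c * (x $ k * x $ m)) * (S $$ (m,l) - a * (v $ m * v $ l)))"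
      using Sinv S x v kl by (subst index_mult_mat_sum[of _ n n _ n]) auto
    also have "\<dots> = (\<Sum>m<n. Sinv $$ (k,m) * S $$ (m,l)) - a * v $ l * (\<Sum>m<n. Sinv $$ (k,m) * v $ m)
        + c * x $ k * (\<Sum>m<n. x $ m * S $$ (m,l)) - c * a * x $ k * v $ l * (\<Sum>m<n. x $ m * v $ m)"
      by (simp add: algebra_simps sum.distrib sum_subtractf sum_distrib_left)
    also have "\<dots> = (if k = l then 1 else 0) + x $ k * v $ l * (c * (1 - a * (v \<bullet> x)) - a)"
      unfolding Sinv_S[OF kl] Sinv_v[OF kl(1)] x_S[OF kl(2)] vx by (simp add: algebra_simps)
    finally show "((Sinv + c \<cdot>\<^sub>m outer x x) * (S - a \<cdot>\<^sub>m outer v v)) $$ (k,l) = 1\<^sub>m n $$ (k,l)"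
      using c kl by simp
  qed (use Sinv S x v in auto)
qed

lemma trace_add_outer_mult:
  assumes X: "X \<in> carrier_mat n n" and M: "M \<in> carrier_mat n n" and x: "x \<in> carrier_vec n"
  shows "trace ((X + c \<cdot>\<^sub>m outer x x) * M) = trace (X * M) + c * (x \<bullet> (M *\<^sub>v x))"
proof -
  have "trace ((X + c \<cdot>\<^sub>m outer x x) * M) = (\<Sum>k<n. \<Sum>l<n. (X $$ (k,l) + c * (x $ k * x $ l)) * M $$ (l,k))"
    using assms by (simp add: trace_def scalar_prod_def atLeast0LessThan)
  also have "\<dots> = trace (X * M) + c * (\<Sum>k<n. \<Sum>l<n. x $ k * M $$ (l,k) * x $ l)"
    using assms by (simp add: trace_def scalar_prod_def atLeast0LessThan algebra_simps sum.distrib sum_distrib_left)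
  also have "(\<Sum>k<n. \<Sum>l<n. x $ k * M $$ (l,k) * x $ l) = x \<bullet> (M *\<^sub>v x)"
    using assms by (subst sum.swap) (simp add: scalar_prod_def atLeast0LessThan sum_distrib_left algebra_simps)
  finally show ?thesis .
qed

lemma sym_pos_def_mat_inverse:
  assumes pd: "sym_pos_def S" and S: "S \<in> carrier_mat n n"
  shows "the (mat_inverse S) \<in> carrier_mat n n" "the (mat_inverse S) * S = 1\<^sub>m n"
    "S * the (mat_inverse S) = 1\<^sub>m n"
proof -
  have "det S \<noteq> 0"
  proof
    assume "det S = 0"
    then obtain y where "y \<in> carrier_vec n" "y \<noteq> 0\<^sub>v n" "S *\<^sub>v y = 0\<^sub>v n"
      using det_0_iff_vec_prod_zero_field[OF S] by blast
    then show False using pd S by (auto simp: sym_pos_def_def)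
  qed
  then have "mat_inverse S \<noteq> None"
    using mat_inverse(1)[OF S, of "()"] det_non_zero_imp_unit[OF S, of "()"] by blast
  then show "the (mat_inverse S) \<in> carrier_mat n n" "the (mat_inverse S) * S = 1\<^sub>m n"
    "S * the (mat_inverse S) = 1\<^sub>m n"
    using mat_inverse(2)[OF S] by auto
qed

subsection \<open>Moving an edge onto loops\<close>

(* The matrix Ahat of the theorem: the weight of the edge {i,j} is moved onto loops at i and j,
   which keeps all degrees and removes the edge from the graph. *)
definition move_edge_to_loops :: "real mat \<Rightarrow> nat \<Rightarrow> nat \<Rightarrow> real mat" where
  "move_edge_to_loops A i j = (let v = unit_vec (dim_row A) i - unit_vec (dim_row A) j
     in A + A $$ (i,j) \<cdot>\<^sub>m outer v v)"

lemma move_edge_to_loops_carrier: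
  assumes "A \<in> carrier_mat n n"
  shows "move_edge_to_loops A i j \<in> carrier_mat n n"
  unfolding move_edge_to_loops_def Let_def
  by (intro add_carrier_mat smult_carrier_mat) (use assms outer_carrier in auto)

lemma move_edge_to_loops_index:
  assumes "A \<in> carrier_mat n n" "i < n" "j < n" "k < n" "l < n"
  shows "move_edge_to_loops A i j $$ (k,l) = A $$ (k,l)
    + A $$ (i,j) * (((if k = i then 1 else 0) - (if k = j then 1 else 0))
                   * ((if l = i then 1 else 0) - (if l = j then 1 else 0)))"
  using assms by (simp add: move_edge_to_loops_def Let_def)

lemma degree_vec_move_edge_to_loops:
  assumes A: "A \<in> carrier_mat n n" and ij: "i < n" "j < n"
  shows "degree_vec (move_edge_to_loops A i j) = degree_vec A"
proof (rule eq_vecI)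
  fix k assume "k < dim_vec (degree_vec A)"
  then have k: "k < n" using A by simp
  have "(\<Sum>l<n. ((if l = i then 1 else 0) - (if l = j then 1 else 0))) = (0::real)"
    using ij by (simp add: sum_subtractf)
  then show "degree_vec (move_edge_to_loops A i j) $ k = degree_vec A $ k"
    using A k ij by (simp add: degree_vec_index[OF move_edge_to_loops_carrier[OF A] k] degree_vec_index[OF A k]
        move_edge_to_loops_index sum.distrib flip: sum_distrib_left)
qed (use A move_edge_to_loops_carrier[OF A, of i j] in simp)

lemma move_edge_to_loops_offdiag:
  assumes A: "A \<in> carrier_mat n n" and sym: "A\<^sup>T = A" and "i < n" "j < n" "k < n" "l < n" "k \<noteq> l"
  shows "move_edge_to_loops A i j $$ (k,l) = delete_edge A i j $$ (k,l)"
  using assms symmetric_mat_index[OF A sym, of i j] by (auto simp: move_edge_to_loops_index delete_edge_def)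

lemma sym_pos_def_regularized_laplacian_move_edge_to_loops:
  assumes A: "A \<in> carrier_mat n n" and sym: "A\<^sup>T = A" and nonneg: "\<forall>k<n. \<forall>l<n. 0 \<le> A $$ (k,l)"
    and d_pos: "\<forall>k<n. 0 < degree_vec A $ k" and ij: "i < n" "j < n" "i \<noteq> j"
    and noncut: "\<not> is_cut_edge A i j"
  shows "sym_pos_def (regularized_laplacian (move_edge_to_loops A i j))"
proof (rule sym_pos_def_regularized_laplacian)
  let ?B = "move_edge_to_loops A i j"
  show B: "?B \<in> carrier_mat n n" by (rule move_edge_to_loops_carrier[OF A])
  note A_sym = symmetric_mat_index[OF A sym]
  show "?B\<^sup>T = ?B"
    using A B ij by (intro eq_matI) (auto simp: move_edge_to_loops_index A_sym)
  show "\<forall>k<n. \<forall>l<n. 0 \<le> ?B $$ (k,l)"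
    using A nonneg ij A_sym[of i j] by (auto simp: move_edge_to_loops_index)
  show "\<forall>k<n. 0 < degree_vec ?B $ k"
    using d_pos by (simp add: degree_vec_move_edge_to_loops[OF A ij(1,2)])
  have "adj_rel ?B = adj_rel (delete_edge A i j)"
    using A B move_edge_to_loops_offdiag[OF A sym ij(1,2)]
    by (intro ext) (auto simp: adj_rel_def delete_edge_def)
  then show "graph_connected ?B"
    using noncut A B by (simp add: is_cut_edge_def graph_connected_def delete_edge_def)
qed

lemma regularized_laplacian_move_edge_to_loops:
  assumes A: "A \<in> carrier_mat n n" and ij: "i < n" "j < n"
  shows "regularized_laplacian (move_edge_to_loops A i j) = regularized_laplacian A
    - A $$ (i,j) \<cdot>\<^sub>m outer (unit_vec n i - unit_vec n j) (unit_vec n i - unit_vec n j)"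
proof -
  let ?B = "move_edge_to_loops A i j"
  have B: "?B \<in> carrier_mat n n" by (rule move_edge_to_loops_carrier[OF A])
  show ?thesis
    using A ij B regularized_laplacian_carrier[OF A] regularized_laplacian_carrier[OF B]
    by (intro eq_matI) (auto simp: regularized_laplacian_index[OF A] regularized_laplacian_index[OF B]
        degree_vec_move_edge_to_loops[OF A ij] move_edge_to_loops_index[OF A ij])
qed

lemma regularized_laplacian_move_edge_to_loops_inverse:
  assumes A: "A \<in> carrier_mat n n" and sym: "A\<^sup>T = A" and nonneg: "\<forall>k<n. \<forall>l<n. 0 \<le> A $$ (k,l)"
    and d_pos: "\<forall>k<n. 0 < degree_vec A $ k" and conn: "graph_connected A"
    and ij: "i < n" "j < n" "i \<noteq> j" and noncut: "\<not> is_cut_edge A i j"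
  defines "x \<equiv> the (mat_inverse (regularized_laplacian A)) *\<^sub>v (unit_vec n i - unit_vec n j)"
  shows "A $$ (i,j) * (x $ i - x $ j) \<noteq> 1"
    and "(the (mat_inverse (regularized_laplacian A)) + (A $$ (i,j) / (1 - A $$ (i,j) * (x $ i - x $ j)))
      \<cdot>\<^sub>m outer x x) * regularized_laplacian (move_edge_to_loops A i j) = 1\<^sub>m n"
proof -
  define Sinv where "Sinv = the (mat_inverse (regularized_laplacian A))"
  define v where "v = unit_vec n i - (unit_vec n j :: real vec)"
  let ?S = "regularized_laplacian A"
  have v: "v \<in> carrier_vec n" by (simp add: v_def)
  have S: "?S \<in> carrier_mat n n" by (rule regularized_laplacian_carrier[OF A])
  have pd: "sym_pos_def ?S" by (rule sym_pos_def_regularized_laplacian[OF A sym nonneg d_pos conn])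
  note Sinv = sym_pos_def_mat_inverse[OF pd S, folded Sinv_def]
  have x: "x \<in> carrier_vec n" and Sx: "?S *\<^sub>v x = v"
    using Sinv S v by (auto simp: x_def v_def Sinv_def simp flip: assoc_mult_mat_vec)
  have vx: "v \<bullet> x = x $ i - x $ j" using x ij by (simp add: v_def minus_scalar_prod_distrib[of _ n])
  have "x \<noteq> 0\<^sub>v n"
  proof
    assume "x = 0\<^sub>v n"
    then have "v $ i = row ?S i \<bullet> 0\<^sub>v n" using Sx S ij by auto
    also have "\<dots> = 0" using S by (simp add: carrier_vecI)
    finally show False using ij by (simp add: v_def)
  qed
  then have "0 < (v \<bullet> x) * (1 - A $$ (i,j) * (v \<bullet> x))"
    using sym_pos_def_regularized_laplacian_move_edge_to_loops[OF A sym nonneg d_pos ij noncut]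
      regularized_laplacian_move_edge_to_loops[OF A ij(1,2)] quadratic_form_rank_one_update[OF S x Sx]
      x S by (auto simp: sym_pos_def_def v_def)
  then show \<alpha>: "A $$ (i,j) * (x $ i - x $ j) \<noteq> 1" by (auto simp: vx)
  have "?S\<^sup>T = ?S" using pd by (simp add: sym_pos_def_def)
  from sherman_morrison[OF S Sinv(1,2) this x Sx, of "A $$ (i,j)"]
  have "(Sinv + (A $$ (i,j) / (1 - A $$ (i,j) * (x $ i - x $ j))) \<cdot>\<^sub>m outer x x) * (?S - A $$ (i,j) \<cdot>\<^sub>m outer v v) = 1\<^sub>m n"
    using \<alpha> by (simp add: vx)
  then show "(the (mat_inverse ?S) + (A $$ (i,j) / (1 - A $$ (i,j) * (x $ i - x $ j))) \<cdot>\<^sub>m outer x x)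
      * regularized_laplacian (move_edge_to_loops A i j) = 1\<^sub>m n"
    by (simp add: Sinv_def regularized_laplacian_move_edge_to_loops[OF A ij(1,2)] v_def)
qed

lemma kemeny_change_rank_one_inverse:
  assumes B: "B \<in> carrier_mat n n" and B': "B' \<in> carrier_mat n n" and n: "0 < n"
    and deg: "degree_vec B' = degree_vec B" and d_pos: "\<forall>k<n. 0 < degree_vec B $ k"
    and Sinv: "Sinv \<in> carrier_mat n n" "Sinv * regularized_laplacian B = 1\<^sub>m n"
    and x: "x \<in> carrier_vec n" and inv': "(Sinv + c \<cdot>\<^sub>m outer x x) * regularized_laplacian B' = 1\<^sub>m n"
  shows "kemeny (diag_of (map_vec inverse (degree_vec B)) * B') - kemeny (diag_of (map_vec inverse (degree_vec B)) * B)
    = complex_of_real (c * (x \<bullet> (diag_of (degree_vec B) *\<^sub>v x)))"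
proof -
  let ?D = "diag_of (degree_vec B)"
  have D: "?D \<in> carrier_mat n n" using diag_of_carrier[of "degree_vec B"] B by simp
  have Sinv': "Sinv + c \<cdot>\<^sub>m outer x x \<in> carrier_mat n n"
    by (intro add_carrier_mat smult_carrier_mat) (use Sinv(1) x outer_carrier in auto)
  have "kemeny (diag_of (map_vec inverse (degree_vec B)) * B') - kemeny (diag_of (map_vec inverse (degree_vec B)) * B)
      = complex_of_real ((trace ((Sinv + c \<cdot>\<^sub>m outer x x) * ?D) - 1) - (trace (Sinv * ?D) - 1))"
    using kemeny_eq_trace_regularized_laplacian[OF B n d_pos Sinv]
      kemeny_eq_trace_regularized_laplacian[OF B' n _ Sinv' inv'] d_pos
    by (simp add: deg)
  also have "(trace ((Sinv + c \<cdot>\<^sub>m outer x x) * ?D) - 1) - (trace (Sinv * ?D) - 1) = c * (x \<bullet> (?D *\<^sub>v x))"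
    using trace_add_outer_mult[OF Sinv(1) D x] by simp
  finally show ?thesis .
qed

theorem mainTheorem8:
  fixes A :: "real mat" and n i j :: nat
  assumes A_carrier: "A \<in> carrier_mat n n"
    and A_sym: "A\<^sup>T = A"
    and A_nonneg: "\<forall>k<n. \<forall>l<n. A $$ (k,l) \<ge> 0"
    and d_pos: "\<forall>k<n. degree_vec A $ k > 0"
    and conn: "graph_connected A"
    and ij: "i < n" "j < n" "i \<noteq> j"
    and aij_pos: "A $$ (i,j) > 0"
    and noncut: "\<not> is_cut_edge A i j"
  shows
    "let d = degree_vec A; D = diag_of d; Dinv = diag_of (map_vec inverse d);
         v = unit_vec n i - unit_vec n j;
         Ahat = A + A $$ (i,j) \<cdot>\<^sub>m outer v v;
         c = kemeny (Dinv * Ahat) - kemeny (Dinv * A);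
         S = D - A + (1 / norm1 d) \<cdot>\<^sub>m outer d d;
         x = the (mat_inverse S) *\<^sub>v v;
         \<alpha> = A $$ (i,j) * (x $ i - x $ j);
         \<beta> = A $$ (i,j) * (x \<bullet> (D *\<^sub>v x))
     in sym_pos_def S \<and> \<alpha> \<noteq> 1 \<and> c = complex_of_real (\<beta> / (1 - \<alpha>))"
proof -
  define d where "d = degree_vec A"
  define a where "a = A $$ (i,j)"
  define v where "v = unit_vec n i - (unit_vec n j :: real vec)"
  define S where "S = regularized_laplacian A"
  define x where "x = the (mat_inverse S) *\<^sub>v v"
  define \<alpha> where "\<alpha> = a * (x $ i - x $ j)"
  have S: "S \<in> carrier_mat n n" using regularized_laplacian_carrier[OF A_carrier] by (simp add: S_def)
  have pd: "sym_pos_def S"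
    unfolding S_def by (rule sym_pos_def_regularized_laplacian[OF A_carrier A_sym A_nonneg d_pos conn])
  note inverse = regularized_laplacian_move_edge_to_loops_inverse[OF A_carrier A_sym A_nonneg d_pos conn ij noncut,
      folded S_def v_def a_def, folded x_def, folded \<alpha>_def]
  have "A + a \<cdot>\<^sub>m outer v v = move_edge_to_loops A i j"
    using A_carrier by (simp add: move_edge_to_loops_def Let_def a_def v_def)
  then have "kemeny (diag_of (map_vec inverse d) * (A + a \<cdot>\<^sub>m outer v v)) - kemeny (diag_of (map_vec inverse d) * A)
      = complex_of_real (a / (1 - \<alpha>) * (x \<bullet> (diag_of d *\<^sub>v x)))"
    using kemeny_change_rank_one_inverse[OF A_carrier move_edge_to_loops_carrier[OF A_carrier] _
        degree_vec_move_edge_to_loops[OF A_carrier ij(1,2)] d_pos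
        sym_pos_def_mat_inverse(1,2)[OF pd S, unfolded S_def] _ inverse(2)[unfolded S_def]]
      sym_pos_def_mat_inverse(1)[OF pd S] ij
    by (simp add: d_def x_def S_def v_def)
  moreover have "diag_of d - A + (1 / norm1 d) \<cdot>\<^sub>m outer d d = S"
    by (simp add: S_def regularized_laplacian_def d_def)
  ultimately show ?thesis
    using pd inverse(1) unfolding Let_def by (simp flip: d_def a_def v_def x_def \<alpha>_def)
qed

end
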